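(* Let $A$ and $B$ be meet-semilattices such that, identifying $A$ with its image $\{{\downarrow}a : a\in A\}$ in $\mathcal{BL} A$, we have $A\subseteq B\subseteq \mathcal{BL} A$ with $A$ a sub-meet-semilattice of $B$ and $B$ a sub-meet-semilattice of $\mathcal{BL} A$. Then $\mathcal{BL} B\cong \mathcal{BL} A$.
   Context: A meet-semilattice is a poset in which all finite meets exist (so it has a top $1$ but need not have a bottom). For a meet-semilattice $A$, a subset $S\subseteq A$ whose join $\bigvee S$ exists in $A$ is called admissible (and $\bigvee S$ a distributive join) if for every $a\in A$ the join $\bigvee\{a\wedge s: s\in S\}$ exists and equals $a\wedge\bigvee S$. A downset $E$ of $A$ is a D-ideal if $\bigvee S\in E$ for every admissible $S\subseteq E$. The Bruns–Lakser completion $\mathcal{BL} A$ is the set of all D-ideals of $A$ ordered by inclusion; it is a frame, and $a\mapsto {\downarrow}a$ embeds $A$ as a join-dense sub-meet-semilattice of $\mathcal{BL} A$. *)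

theory Defs
  imports Main
begin

definition is_partial_order :: "'a set \<Rightarrow> ('a \<Rightarrow> 'a \<Rightarrow> bool) \<Rightarrow> bool" where
  "is_partial_order S le \<longleftrightarrow>
     (\<forall>x\<in>S. le x x) \<and>
     (\<forall>x\<in>S. \<forall>y\<in>S. le x y \<and> le y x \<longrightarrow> x = y) \<and>
     (\<forall>x\<in>S. \<forall>y\<in>S. \<forall>z\<in>S. le x y \<and> le y z \<longrightarrow> le x z)"

definition is_top :: "'a set \<Rightarrow> ('a \<Rightarrow> 'a \<Rightarrow> bool) \<Rightarrow> 'a \<Rightarrow> bool" where
  "is_top S le t \<longleftrightarrow> t \<in> S \<and> (\<forall>x\<in>S. le x t)"

definition is_glb :: "'a set \<Rightarrow> ('a \<Rightarrow> 'a \<Rightarrow> bool) \<Rightarrow> 'a \<Rightarrow> 'a \<Rightarrow> 'a \<Rightarrow> bool" where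
  "is_glb S le a b m \<longleftrightarrow> m \<in> S \<and> le m a \<and> le m b \<and>
     (\<forall>x\<in>S. le x a \<and> le x b \<longrightarrow> le x m)"

definition is_lub :: "'a set \<Rightarrow> ('a \<Rightarrow> 'a \<Rightarrow> bool) \<Rightarrow> 'a set \<Rightarrow> 'a \<Rightarrow> bool" where
  "is_lub S le X j \<longleftrightarrow> j \<in> S \<and> (\<forall>x\<in>X. le x j) \<and>
     (\<forall>y\<in>S. (\<forall>x\<in>X. le x y) \<longrightarrow> le j y)"

definition meet_semilattice :: "'a set \<Rightarrow> ('a \<Rightarrow> 'a \<Rightarrow> bool) \<Rightarrow> bool" where
  "meet_semilattice S le \<longleftrightarrow> is_partial_order S le \<and> (\<exists>t. is_top S le t) \<and>
     (\<forall>a\<in>S. \<forall>b\<in>S. \<exists>m. is_glb S le a b m)"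

definition sub_meet_semilattice :: "'a set \<Rightarrow> ('a \<Rightarrow> 'a \<Rightarrow> bool) \<Rightarrow> 'a set \<Rightarrow> bool" where
  "sub_meet_semilattice T le S \<longleftrightarrow> S \<subseteq> T \<and>
     (\<forall>t. is_top T le t \<longrightarrow> t \<in> S) \<and>
     (\<forall>x\<in>S. \<forall>y\<in>S. \<forall>m. is_glb T le x y m \<longrightarrow> m \<in> S)"

text \<open>Admissible subsets (whose join is distributive).\<close>
definition admissible :: "'a set \<Rightarrow> ('a \<Rightarrow> 'a \<Rightarrow> bool) \<Rightarrow> 'a set \<Rightarrow> bool" where
  "admissible S le X \<longleftrightarrow> X \<subseteq> S \<and> (\<exists>j. is_lub S le X j) \<and>
     (\<forall>a\<in>S. \<forall>j m. is_lub S le X j \<and> is_glb S le a j m \<longrightarrow>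
        is_lub S le {m'. \<exists>s\<in>X. is_glb S le a s m'} m)"

definition is_downset :: "'a set \<Rightarrow> ('a \<Rightarrow> 'a \<Rightarrow> bool) \<Rightarrow> 'a set \<Rightarrow> bool" where
  "is_downset S le E \<longleftrightarrow> E \<subseteq> S \<and> (\<forall>x\<in>S. \<forall>y\<in>E. le x y \<longrightarrow> x \<in> E)"

definition D_ideal :: "'a set \<Rightarrow> ('a \<Rightarrow> 'a \<Rightarrow> bool) \<Rightarrow> 'a set \<Rightarrow> bool" where
  "D_ideal S le E \<longleftrightarrow> is_downset S le E \<and>
     (\<forall>X j. X \<subseteq> E \<and> admissible S le X \<and> is_lub S le X j \<longrightarrow> j \<in> E)"

text \<open>Bruns--Lakser completion: the set of D-ideals (ordered by inclusion).\<close>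
definition BL :: "'a set \<Rightarrow> ('a \<Rightarrow> 'a \<Rightarrow> bool) \<Rightarrow> 'a set set" where
  "BL S le = {E. D_ideal S le E}"

definition principal :: "'a set \<Rightarrow> ('a \<Rightarrow> 'a \<Rightarrow> bool) \<Rightarrow> 'a \<Rightarrow> 'a set" where
  "principal S le a = {x\<in>S. le x a}"

definition order_isomorphic :: "'a set \<Rightarrow> ('a \<Rightarrow> 'a \<Rightarrow> bool) \<Rightarrow> 'b set \<Rightarrow> ('b \<Rightarrow> 'b \<Rightarrow> bool) \<Rightarrow> bool" where
  "order_isomorphic S le T le' \<longleftrightarrow>
     (\<exists>f. bij_betw f S T \<and> (\<forall>x\<in>S. \<forall>y\<in>S. le x y \<longleftrightarrow> le' (f x) (f y)))"

end

theory Submission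
  imports Defs
begin

text \<open>The isomorphism sends a D-ideal \<open>J\<close> of \<open>B\<close> to \<open>{a. \<down>a \<in> J}\<close>, with inverse
  \<open>I \<mapsto> {b \<in> B. b \<subseteq> I}\<close>. Meets in \<open>B\<close> are intersections, which lets one compare
  distributive joins in \<open>A\<close> and in \<open>B\<close>: a distributive join \<open>\<Or>S\<close> in \<open>A\<close> gives the
  distributive join \<open>\<down>(\<Or>S) = \<Or>{\<down>s. s \<in> S}\<close> in \<open>B\<close>, and every \<open>b \<in> B\<close> is the
  distributive join of the principal ideals below it. The transfer back to \<open>A\<close> rests on one
  observation: if a downset \<open>U\<close> is join-dense in a downset \<open>K\<close> (each \<open>y \<in> K\<close> is the join of
  the elements of \<open>U\<close> below \<open>y\<close>), these joins are automatically distributive, so every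
  D-ideal containing \<open>U\<close> contains \<open>K\<close>.\<close>

lemma is_lub_subset_unique: "is_lub S (\<subseteq>) X j \<Longrightarrow> is_lub S (\<subseteq>) X j' \<Longrightarrow> j = j'"
  unfolding is_lub_def by (meson subset_antisym)

lemma is_lub_subset_Union: "\<Union>F \<in> S \<Longrightarrow> is_lub S (\<subseteq>) F (\<Union>F)"
  unfolding is_lub_def by blast

lemma is_glb_subset_iff_Int: "c \<inter> d \<in> S \<Longrightarrow> is_glb S (\<subseteq>) c d m \<longleftrightarrow> m = c \<inter> d"
  unfolding is_glb_def by (auto intro: subset_antisym)

lemma is_lub_superset:
  assumes "is_lub S le T y" and "T \<subseteq> V" and "\<forall>v\<in>V. le v y"
  shows "is_lub S le V y"
  using assms unfolding is_lub_def by blast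

lemma admissible_Int_closed_iff:
  assumes Int_closed: "\<And>c d. c \<in> S \<Longrightarrow> d \<in> S \<Longrightarrow> c \<inter> d \<in> S"
    and XS: "X \<subseteq> S" and k: "is_lub S (\<subseteq>) X k"
  shows "admissible S (\<subseteq>) X \<longleftrightarrow> (\<forall>c\<in>S. is_lub S (\<subseteq>) ((\<inter>) c ` X) (c \<inter> k))"
proof -
  have "k \<in> S" using k unfolding is_lub_def by blast
  have lub_iff: "is_lub S (\<subseteq>) X j \<longleftrightarrow> j = k" for j
    using k is_lub_subset_unique by blast
  have glb_iff: "is_glb S (\<subseteq>) c d m \<longleftrightarrow> m = c \<inter> d" if "c \<in> S" "d \<in> S" for c d m
    using is_glb_subset_iff_Int[OF Int_closed[OF that]] .
  have meets: "{m. \<exists>x\<in>X. is_glb S (\<subseteq>) c x m} = (\<inter>) c ` X" if "c \<in> S" for c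
    using glb_iff[OF that] XS by blast
  show ?thesis
    unfolding admissible_def lub_iff using XS \<open>k \<in> S\<close> glb_iff meets by auto
qed

lemma is_downset_Int: "is_downset S le C \<Longrightarrow> is_downset S le D \<Longrightarrow> is_downset S le (C \<inter> D)"
  unfolding is_downset_def by blast

lemma is_downset_UN: "(\<And>i. i \<in> I \<Longrightarrow> is_downset S le (D i)) \<Longrightarrow> is_downset S le (\<Union>i\<in>I. D i)"
  unfolding is_downset_def by blast

lemma D_ideal_downset: "D_ideal S le E \<Longrightarrow> is_downset S le E"
  unfolding D_ideal_def by blast

lemma D_ideal_subset: "D_ideal S le E \<Longrightarrow> E \<subseteq> S"
  unfolding D_ideal_def is_downset_def by blast

lemma D_ideal_downward: "D_ideal S le E \<Longrightarrow> x \<in> S \<Longrightarrow> y \<in> E \<Longrightarrow> le x y \<Longrightarrow> x \<in> E"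
  unfolding D_ideal_def is_downset_def by blast

lemma D_ideal_join:
  "D_ideal S le E \<Longrightarrow> X \<subseteq> E \<Longrightarrow> admissible S le X \<Longrightarrow> is_lub S le X j \<Longrightarrow> j \<in> E"
  unfolding D_ideal_def by blast

lemma D_idealI:
  "is_downset S le E \<Longrightarrow> (\<And>X j. X \<subseteq> E \<Longrightarrow> admissible S le X \<Longrightarrow> is_lub S le X j \<Longrightarrow> j \<in> E)
    \<Longrightarrow> D_ideal S le E"
  unfolding D_ideal_def by blast

lemma D_ideal_Int:
  assumes "D_ideal S le C" and "D_ideal S le D"
  shows "D_ideal S le (C \<inter> D)"
proof (rule D_idealI)
  show "is_downset S le (C \<inter> D)"
    using is_downset_Int[OF D_ideal_downset[OF assms(1)] D_ideal_downset[OF assms(2)]] .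
  show "j \<in> C \<inter> D" if "X \<subseteq> C \<inter> D" "admissible S le X" "is_lub S le X j" for X j
    using D_ideal_join[OF assms(1)] D_ideal_join[OF assms(2)] that by blast
qed

lemma order_isomorphicI:
  assumes "f ` S \<subseteq> T" and "g ` T \<subseteq> S"
    and "\<And>x. x \<in> S \<Longrightarrow> g (f x) = x" and "\<And>y. y \<in> T \<Longrightarrow> f (g y) = y"
    and "\<And>x y. x \<in> S \<Longrightarrow> y \<in> S \<Longrightarrow> le x y \<Longrightarrow> le' (f x) (f y)"
    and "\<And>x y. x \<in> T \<Longrightarrow> y \<in> T \<Longrightarrow> le' x y \<Longrightarrow> le (g x) (g y)"
  shows "order_isomorphic S le T le'"
  unfolding order_isomorphic_def
proof (intro exI conjI ballI)
  show "bij_betw f S T"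
    using assms(1-4) by (intro bij_betw_byWitness[where f' = g]) auto
  show "le x y \<longleftrightarrow> le' (f x) (f y)" if "x \<in> S" "y \<in> S" for x y
    using assms(1,3,5,6) that by (metis image_subset_iff)
qed

locale poset_on =
  fixes S :: "'a set" and le :: "'a \<Rightarrow> 'a \<Rightarrow> bool"
  assumes partial_order: "is_partial_order S le"
begin

lemma refl_le: "x \<in> S \<Longrightarrow> le x x"
  using partial_order unfolding is_partial_order_def by blast

lemma antisym_le: "x \<in> S \<Longrightarrow> y \<in> S \<Longrightarrow> le x y \<Longrightarrow> le y x \<Longrightarrow> x = y"
  using partial_order unfolding is_partial_order_def by blast

lemma trans_le: "x \<in> S \<Longrightarrow> y \<in> S \<Longrightarrow> z \<in> S \<Longrightarrow> le x y \<Longrightarrow> le y z \<Longrightarrow> le x z"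
  using partial_order unfolding is_partial_order_def by blast

lemma is_lub_unique: "is_lub S le X j \<Longrightarrow> is_lub S le X j' \<Longrightarrow> j = j'"
  unfolding is_lub_def by (meson antisym_le)

lemma is_downset_principal: "a \<in> S \<Longrightarrow> is_downset S le (principal S le a)"
  unfolding is_downset_def principal_def by (blast intro: trans_le)

lemma principal_mono: "x \<in> S \<Longrightarrow> y \<in> S \<Longrightarrow> le x y \<Longrightarrow> principal S le x \<subseteq> principal S le y"
  unfolding principal_def by (blast intro: trans_le)

lemma principal_subset_iff: "is_downset S le D \<Longrightarrow> a \<in> S \<Longrightarrow> principal S le a \<subseteq> D \<longleftrightarrow> a \<in> D"
  unfolding is_downset_def principal_def using refl_le by blast

text \<open>The meet \<open>m = a \<and> x\<close> lies in \<open>K\<close>, and the meets of \<open>a\<close> with the part of \<open>U\<close> below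
  \<open>x\<close> are exactly the part of \<open>U\<close> below \<open>m\<close>, whose join is \<open>m\<close> by density.\<close>
lemma admissible_if_join_dense:
  assumes U: "is_downset S le U" and K: "is_downset S le K"
    and dense: "\<And>y. y \<in> K \<Longrightarrow> is_lub S le {z\<in>U. le z y} y"
    and x: "x \<in> K"
  shows "admissible S le {z\<in>U. le z x}"
  unfolding admissible_def
proof (intro conjI ballI allI impI)
  have xS: "x \<in> S" using K x unfolding is_downset_def by blast
  show "{z\<in>U. le z x} \<subseteq> S" using U unfolding is_downset_def by blast
  show "\<exists>j. is_lub S le {z\<in>U. le z x} j" using dense x by blast
  fix a j m
  assume a: "a \<in> S" and jm: "is_lub S le {z\<in>U. le z x} j \<and> is_glb S le a j m"
  then have m: "is_glb S le a x m" using is_lub_unique dense x by blast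
  then have mS: "m \<in> S" and ma: "le m a" and mx: "le m x" unfolding is_glb_def by auto
  have mK: "m \<in> K" using K x mS mx unfolding is_downset_def by blast
  have "{m'. \<exists>s\<in>{z\<in>U. le z x}. is_glb S le a s m'} = {z\<in>U. le z m}"
  proof (intro equalityI subsetI)
    fix m' assume "m' \<in> {m'. \<exists>s\<in>{z\<in>U. le z x}. is_glb S le a s m'}"
    then obtain s where s: "s \<in> U" "le s x" and g: "is_glb S le a s m'" by blast
    have sS: "s \<in> S" using U s unfolding is_downset_def by blast
    have m'S: "m' \<in> S" and "le m' s" "le m' a" using g unfolding is_glb_def by auto
    have "le m' x" using trans_le[OF m'S sS xS] \<open>le m' s\<close> s(2) by blast
    then have "le m' m" using m m'S \<open>le m' a\<close> unfolding is_glb_def by blast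
    moreover have "m' \<in> U" using U m'S s \<open>le m' s\<close> unfolding is_downset_def by blast
    ultimately show "m' \<in> {z\<in>U. le z m}" by blast
  next
    fix z assume z: "z \<in> {z\<in>U. le z m}"
    then have zS: "z \<in> S" using U unfolding is_downset_def by blast
    have "is_glb S le a z z"
      using z zS refl_le trans_le[OF zS mS a] ma unfolding is_glb_def by blast
    then show "z \<in> {m'. \<exists>s\<in>{z\<in>U. le z x}. is_glb S le a s m'}"
      using z trans_le[OF zS mS xS] mx by blast
  qed
  then show "is_lub S le {m'. \<exists>s\<in>{z\<in>U. le z x}. is_glb S le a s m'} m"
    using dense mK by simp
qed

lemma D_ideal_contains_join_dense:
  assumes I: "D_ideal S le I" and U: "is_downset S le U" and K: "is_downset S le K"
    and dense: "\<And>y. y \<in> K \<Longrightarrow> is_lub S le {z\<in>U. le z y} y"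
    and "U \<subseteq> I"
  shows "K \<subseteq> I"
proof
  fix x assume x: "x \<in> K"
  have "{z\<in>U. le z x} \<subseteq> I" using \<open>U \<subseteq> I\<close> by blast
  moreover have "admissible S le {z\<in>U. le z x}"
    using U K dense x by (rule admissible_if_join_dense)
  ultimately show "x \<in> I" using D_ideal_join[OF I] dense[OF x] by blast
qed

end

locale BL_intermediate = poset_on A le
  for A :: "'a set" and le :: "'a \<Rightarrow> 'a \<Rightarrow> bool" +
  fixes B :: "'a set set"
  assumes principals_sub: "sub_meet_semilattice B (\<subseteq>) (principal A le ` A)"
    and sub_BL: "sub_meet_semilattice (BL A le) (\<subseteq>) B"
begin

abbreviation down :: "'a \<Rightarrow> 'a set" ("\<down>_" [1000] 1000)
  where "\<down>a \<equiv> principal A le a"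

lemma B_D_ideal: "b \<in> B \<Longrightarrow> D_ideal A le b"
  using sub_BL unfolding sub_meet_semilattice_def BL_def by auto

lemma B_downset: "b \<in> B \<Longrightarrow> is_downset A le b"
  by (rule D_ideal_downset[OF B_D_ideal])

lemma principal_in_B: "a \<in> A \<Longrightarrow> \<down>a \<in> B"
  using principals_sub unfolding sub_meet_semilattice_def by auto

lemma B_Int:
  assumes "c \<in> B" and "d \<in> B"
  shows "c \<inter> d \<in> B"
proof -
  have "c \<inter> d \<in> BL A le" using D_ideal_Int[OF B_D_ideal B_D_ideal] assms unfolding BL_def by auto
  then have "is_glb (BL A le) (\<subseteq>) c d (c \<inter> d)" unfolding is_glb_def by blast
  then show "c \<inter> d \<in> B" using sub_BL assms unfolding sub_meet_semilattice_def by blast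
qed

lemma admissible_B_iff:
  "X \<subseteq> B \<Longrightarrow> is_lub B (\<subseteq>) X k \<Longrightarrow>
    admissible B (\<subseteq>) X \<longleftrightarrow> (\<forall>c\<in>B. is_lub B (\<subseteq>) ((\<inter>) c ` X) (c \<inter> k))"
  using admissible_Int_closed_iff[where S = B] B_Int by blast

lemma Union_principals:
  assumes "b \<in> B"
  shows "(\<Union>a\<in>b. \<down>a) = b"
proof
  show "(\<Union>a\<in>b. \<down>a) \<subseteq> b"
    using principal_subset_iff[OF B_downset[OF assms]] B_downset[OF assms]
    unfolding is_downset_def by blast
  show "b \<subseteq> (\<Union>a\<in>b. \<down>a)"
    using B_downset[OF assms] refl_le unfolding is_downset_def principal_def by blast
qed

lemma is_lub_principals: "b \<in> B \<Longrightarrow> is_lub B (\<subseteq>) (down ` b) b"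
  using is_lub_subset_Union[of "down ` b" B] Union_principals by simp

lemma admissible_principals:
  assumes b: "b \<in> B"
  shows "admissible B (\<subseteq>) (down ` b)"
proof -
  have "is_lub B (\<subseteq>) ((\<inter>) c ` down ` b) (c \<inter> b)" if "c \<in> B" for c
  proof -
    have "\<Union>((\<inter>) c ` down ` b) = c \<inter> b" using Union_principals[OF b] by blast
    then show ?thesis using is_lub_subset_Union[of "(\<inter>) c ` down ` b" B] B_Int[OF that b] by simp
  qed
  moreover have "down ` b \<subseteq> B"
    using b B_downset principal_in_B unfolding is_downset_def by blast
  ultimately show ?thesis using admissible_B_iff is_lub_principals[OF b] by blast
qed

lemma is_lub_principal_image:
  assumes S: "admissible A le S" and j: "is_lub A le S j"
  shows "is_lub B (\<subseteq>) (down ` S) (\<down>j)"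
  unfolding is_lub_def
proof (intro conjI ballI impI)
  have SA: "S \<subseteq> A" using S unfolding admissible_def by blast
  have jA: "j \<in> A" using j unfolding is_lub_def by blast
  show "\<down>j \<in> B" using principal_in_B[OF jA] .
  show "x \<subseteq> \<down>j" if "x \<in> down ` S" for x
    using that j SA jA principal_mono unfolding is_lub_def by blast
  fix c assume c: "c \<in> B" and ub: "\<forall>x\<in>down ` S. x \<subseteq> c"
  then have "S \<subseteq> c" using principal_subset_iff[OF B_downset[OF c]] SA by blast
  then have "j \<in> c" using D_ideal_join[OF B_D_ideal[OF c] _ S j] by blast
  then show "\<down>j \<subseteq> c" using principal_subset_iff[OF B_downset[OF c] jA] by blast
qed

text \<open>The part of \<open>c\<close> below the \<open>s \<in> S\<close> is join-dense in \<open>c \<inter> \<down>j\<close>, because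
  \<open>y = y \<and> \<Or>S = \<Or>{y \<and> s. s \<in> S}\<close> for \<open>y \<le> j\<close>.\<close>
lemma is_lub_Int_principal_image:
  assumes S: "admissible A le S" and j: "is_lub A le S j" and c: "c \<in> B"
  shows "is_lub B (\<subseteq>) ((\<inter>) c ` down ` S) (c \<inter> \<down>j)"
  unfolding is_lub_def
proof (intro conjI ballI impI)
  have SA: "S \<subseteq> A" using S unfolding admissible_def by blast
  have jA: "j \<in> A" using j unfolding is_lub_def by blast
  have below_j: "\<down>s \<subseteq> \<down>j" if "s \<in> S" for s
    using principal_mono[OF _ jA] SA j that unfolding is_lub_def by blast
  show "c \<inter> \<down>j \<in> B" using B_Int[OF c principal_in_B[OF jA]] .
  show "x \<subseteq> c \<inter> \<down>j" if "x \<in> (\<inter>) c ` down ` S" for x using that below_j by blast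
  fix b assume b: "b \<in> B" and ub: "\<forall>x\<in>(\<inter>) c ` down ` S. x \<subseteq> b"
  define U where "U = (\<Union>s\<in>S. c \<inter> \<down>s)"
  have U: "is_downset A le U"
    unfolding U_def
  proof (rule is_downset_UN)
    fix s assume "s \<in> S"
    then show "is_downset A le (c \<inter> \<down>s)"
      using is_downset_Int[OF B_downset[OF c] is_downset_principal] SA by blast
  qed
  have K: "is_downset A le (c \<inter> \<down>j)"
    using is_downset_Int[OF B_downset[OF c] is_downset_principal[OF jA]] .
  have dense: "is_lub A le {z\<in>U. le z y} y" if y: "y \<in> c \<inter> \<down>j" for y
  proof -
    have yA: "y \<in> A" and "le y j" and yc: "y \<in> c" using y unfolding principal_def by auto
    then have "is_glb A le y j y" using refl_le unfolding is_glb_def by blast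
    then have "is_lub A le {m. \<exists>s\<in>S. is_glb A le y s m} y"
      using S j yA unfolding admissible_def by blast
    moreover have "{m. \<exists>s\<in>S. is_glb A le y s m} \<subseteq> {z\<in>U. le z y}"
    proof
      fix m assume "m \<in> {m. \<exists>s\<in>S. is_glb A le y s m}"
      then obtain s where s: "s \<in> S" and "is_glb A le y s m" by blast
      then have mA: "m \<in> A" and my: "le m y" and ms: "le m s" unfolding is_glb_def by auto
      have "m \<in> c" using B_downset[OF c] yc mA my unfolding is_downset_def by blast
      moreover have "m \<in> \<down>s" using mA ms unfolding principal_def by blast
      ultimately show "m \<in> {z\<in>U. le z y}" using s my unfolding U_def by blast
    qed
    ultimately show ?thesis by (rule is_lub_superset) blast
  qed
  have "c \<inter> \<down>s \<subseteq> b" if "s \<in> S" for s using ub that by simp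
  then have "U \<subseteq> b" unfolding U_def by (rule UN_least)
  with b[THEN B_D_ideal] U K dense show "c \<inter> \<down>j \<subseteq> b" by (rule D_ideal_contains_join_dense)
qed

lemma admissible_principal_image:
  assumes S: "admissible A le S" and j: "is_lub A le S j"
  shows "admissible B (\<subseteq>) (down ` S)"
proof -
  have "down ` S \<subseteq> B" using S principal_in_B unfolding admissible_def by blast
  then show ?thesis
    using admissible_B_iff is_lub_principal_image[OF S j] is_lub_Int_principal_image[OF S j] by blast
qed

lemma is_lub_Union_if_is_lub_principal:
  assumes y: "y \<in> A" and F: "is_lub B (\<subseteq>) F (\<down>y)"
  shows "is_lub A le (\<Union>F) y"
  unfolding is_lub_def
proof (intro conjI ballI impI)
  show "y \<in> A" by fact
  show "le x y" if "x \<in> \<Union>F" for x using that F unfolding is_lub_def principal_def by blast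
  fix u assume u: "u \<in> A" and ub: "\<forall>x\<in>\<Union>F. le x u"
  have "\<forall>f\<in>F. f \<subseteq> \<down>u" using F ub unfolding is_lub_def principal_def by blast
  then have "\<down>y \<subseteq> \<down>u" using F principal_in_B[OF u] unfolding is_lub_def by blast
  then show "le y u" using refl_le[OF y] y unfolding principal_def by blast
qed

definition principal_preimage :: "'a set set \<Rightarrow> 'a set"
  where "principal_preimage J = {a\<in>A. \<down>a \<in> J}"

definition B_below :: "'a set \<Rightarrow> 'a set set"
  where "B_below I = {b\<in>B. b \<subseteq> I}"

lemma principal_preimage_mono: "J \<subseteq> J' \<Longrightarrow> principal_preimage J \<subseteq> principal_preimage J'"
  unfolding principal_preimage_def by blast

lemma B_below_mono: "I \<subseteq> I' \<Longrightarrow> B_below I \<subseteq> B_below I'"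
  unfolding B_below_def by blast

lemma principal_preimage_in_BL:
  assumes "J \<in> BL B (\<subseteq>)"
  shows "principal_preimage J \<in> BL A le"
  unfolding BL_def mem_Collect_eq
proof (rule D_idealI)
  have J: "D_ideal B (\<subseteq>) J" using assms unfolding BL_def by blast
  show "is_downset A le (principal_preimage J)"
    unfolding is_downset_def principal_preimage_def
    using D_ideal_downward[OF J principal_in_B] principal_mono by blast
  fix S j assume SJ: "S \<subseteq> principal_preimage J" and S: "admissible A le S" and j: "is_lub A le S j"
  have "down ` S \<subseteq> J" using SJ unfolding principal_preimage_def by blast
  then have "\<down>j \<in> J"
    by (rule D_ideal_join[OF J _ admissible_principal_image[OF S j] is_lub_principal_image[OF S j]])
  moreover have "j \<in> A" using j unfolding is_lub_def by blast
  ultimately show "j \<in> principal_preimage J" unfolding principal_preimage_def by blast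
qed

lemma B_below_in_BL:
  assumes "I \<in> BL A le"
  shows "B_below I \<in> BL B (\<subseteq>)"
  unfolding BL_def mem_Collect_eq
proof (rule D_idealI)
  have I: "D_ideal A le I" using assms unfolding BL_def by blast
  show "is_downset B (\<subseteq>) (B_below I)" unfolding is_downset_def B_below_def by blast
  fix X k assume XI: "X \<subseteq> B_below I" and X: "admissible B (\<subseteq>) X" and k: "is_lub B (\<subseteq>) X k"
  have XB: "X \<subseteq> B" and kB: "k \<in> B" using XI k unfolding B_below_def is_lub_def by auto
  have U: "is_downset A le (\<Union>X)"
    using is_downset_UN[where I = X and D = "\<lambda>x. x"] B_downset XB by auto
  have dense: "is_lub A le {z\<in>\<Union>X. le z y} y" if y: "y \<in> k" for y
  proof -
    have yA: "y \<in> A" using B_downset[OF kB] y unfolding is_downset_def by blast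
    have "is_lub B (\<subseteq>) ((\<inter>) (\<down>y) ` X) (\<down>y \<inter> k)"
      using admissible_B_iff[OF XB k] X principal_in_B[OF yA] by blast
    moreover have "\<down>y \<inter> k = \<down>y"
      using principal_subset_iff[OF B_downset[OF kB] yA] y by blast
    ultimately have "is_lub B (\<subseteq>) ((\<inter>) (\<down>y) ` X) (\<down>y)" by simp
    then have "is_lub A le (\<Union>((\<inter>) (\<down>y) ` X)) y" by (rule is_lub_Union_if_is_lub_principal[OF yA])
    moreover have "\<Union>((\<inter>) (\<down>y) ` X) = {z\<in>\<Union>X. le z y}"
      using XB B_downset unfolding is_downset_def principal_def by blast
    ultimately show ?thesis by simp
  qed
  have "\<Union>X \<subseteq> I" using XI unfolding B_below_def by blast
  with I U B_downset[OF kB] dense have "k \<subseteq> I" by (rule D_ideal_contains_join_dense)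
  then show "k \<in> B_below I" using kB unfolding B_below_def by blast
qed

lemma principal_preimage_B_below:
  assumes "I \<in> BL A le"
  shows "principal_preimage (B_below I) = I"
proof -
  have I: "is_downset A le I" using assms D_ideal_downset unfolding BL_def by blast
  have "a \<in> A \<and> \<down>a \<subseteq> I \<longleftrightarrow> a \<in> I" for a
    using principal_subset_iff[OF I] I unfolding is_downset_def by blast
  then show ?thesis unfolding principal_preimage_def B_below_def using principal_in_B by blast
qed

lemma B_below_principal_preimage:
  assumes "J \<in> BL B (\<subseteq>)"
  shows "B_below (principal_preimage J) = J"
proof -
  have J: "D_ideal B (\<subseteq>) J" using assms unfolding BL_def by blast
  have "b \<in> B_below (principal_preimage J) \<longleftrightarrow> b \<in> J" for b
  proof (cases "b \<in> B")
    case True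
    have "b \<subseteq> A" using B_downset[OF True] unfolding is_downset_def by blast
    then have "b \<subseteq> principal_preimage J \<longleftrightarrow> down ` b \<subseteq> J"
      unfolding principal_preimage_def by blast
    also have "\<dots> \<longleftrightarrow> b \<in> J"
    proof
      assume "down ` b \<subseteq> J"
      then show "b \<in> J"
        using D_ideal_join[OF J _ admissible_principals[OF True] is_lub_principals[OF True]] by blast
    next
      assume "b \<in> J"
      have "\<down>a \<in> J" if "a \<in> b" for a
        using D_ideal_downward[OF J principal_in_B] principal_subset_iff[OF B_downset[OF True]]
          \<open>b \<subseteq> A\<close> \<open>b \<in> J\<close> that by blast
      then show "down ` b \<subseteq> J" by blast
    qed
    finally show ?thesis using True unfolding B_below_def by blast
  next
    case False
    then show ?thesis using D_ideal_subset[OF J] unfolding B_below_def by blast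
  qed
  then show ?thesis by (rule set_eqI)
qed

end

theorem theorem3p5:
  fixes A :: "'a set" and leA :: "'a \<Rightarrow> 'a \<Rightarrow> bool" and B :: "'a set set"
  assumes "meet_semilattice A leA"
    and "sub_meet_semilattice B (\<subseteq>) (principal A leA ` A)"
    and "sub_meet_semilattice (BL A leA) (\<subseteq>) B"
  shows "order_isomorphic (BL B (\<subseteq>)) (\<subseteq>) (BL A leA) (\<subseteq>)"
proof -
  have "is_partial_order A leA" using assms(1) unfolding meet_semilattice_def by blast
  then interpret BL_intermediate A leA B
    by unfold_locales (simp_all add: assms(2,3))
  show ?thesis
  proof (rule order_isomorphicI[where f = principal_preimage and g = B_below])
    show "principal_preimage ` BL B (\<subseteq>) \<subseteq> BL A leA" using principal_preimage_in_BL by blast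
    show "B_below ` BL A leA \<subseteq> BL B (\<subseteq>)" using B_below_in_BL by blast
  qed (simp_all add: B_below_principal_preimage principal_preimage_B_below
      principal_preimage_mono B_below_mono)
qed

end
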